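(* Let $G$ be a bipartite cubic graph and let $C = v_1v_2\cdots v_tv_1$ be a cycle in $G$ with $t \ge 6$. Then $V(C)$ can be partitioned into at most $\frac{t}{3}$ sets $W_1,\dots,W_m$ (so $m \le t/3$) such that each $G[W_j]$ is a path with at least $2$ vertices.
   Context: All graphs are finite and simple; cubic means $3$-regular. $G[W]$ denotes the subgraph of $G$ induced on the vertex set $W$. *)

theory Defs
  imports Main
begin

definition simple_graph :: "'a set \<Rightarrow> ('a \<Rightarrow> 'a \<Rightarrow> bool) \<Rightarrow> bool" where
  "simple_graph V E \<longleftrightarrow> finite V \<and> (\<forall>x y. E x y \<longrightarrow> x \<in> V \<and> y \<in> V)
     \<and> (\<forall>x y. E x y \<longrightarrow> E y x) \<and> (\<forall>x. \<not> E x x)"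

definition cubic :: "'a set \<Rightarrow> ('a \<Rightarrow> 'a \<Rightarrow> bool) \<Rightarrow> bool" where
  "cubic V E \<longleftrightarrow> (\<forall>v\<in>V. card {u \<in> V. E v u} = 3)"

definition bipartite :: "'a set \<Rightarrow> ('a \<Rightarrow> 'a \<Rightarrow> bool) \<Rightarrow> bool" where
  "bipartite V E \<longleftrightarrow> (\<exists>A B. A \<union> B = V \<and> A \<inter> B = {} \<and>
     (\<forall>x y. E x y \<longrightarrow> (x \<in> A \<and> y \<in> B) \<or> (x \<in> B \<and> y \<in> A)))"

text \<open>The list vs = [v_1,...,v_t] describes the cycle v_1 v_2 ... v_t v_1 in G (a subgraph, not necessarily induced).\<close>
definition is_cycle :: "'a set \<Rightarrow> ('a \<Rightarrow> 'a \<Rightarrow> bool) \<Rightarrow> 'a list \<Rightarrow> bool" where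
  "is_cycle V E vs \<longleftrightarrow> length vs \<ge> 3 \<and> distinct vs \<and> set vs \<subseteq> V \<and>
     (\<forall>i < length vs. E (vs ! i) (vs ! ((i + 1) mod length vs)))"

text \<open>G[W] is a path: W can be listed as distinct ps such that two vertices of W are adjacent
  in G exactly when they are consecutive in ps.\<close>
definition induced_path :: "('a \<Rightarrow> 'a \<Rightarrow> bool) \<Rightarrow> 'a set \<Rightarrow> bool" where
  "induced_path E W \<longleftrightarrow> (\<exists>ps. distinct ps \<and> set ps = W \<and>
     (\<forall>i < length ps. \<forall>j < length ps. E (ps ! i) (ps ! j) \<longleftrightarrow> (i = j + 1 \<or> j = i + 1)))"

end

theory Submission imports Defs begin

text \<open>Cut the cycle into arcs of consecutive vertices. Bipartiteness makes vertices at even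
  distance along the cycle non-adjacent, so an arc of at most five vertices induces a path unless it
  contains a chord v_i v_{i+3}. If 3 divides the length, arcs of three vertices suffice. Otherwise one
  arc of four or five vertices, or two arcs of four, must be placed free of such chords. Cubicity
  forbids the chords v_i v_{i+3} and v_{i+3} v_{i+6} together, as v_{i+3} would get four neighbours.
  So either two consecutive positions carry no chord (one arc of five), or a chord at i forces none
  at i+3, hence one at i+4 and none at i+7 (two arcs of four starting at i+3 and i+7).\<close>

definition path_partition :: "('a \<Rightarrow> 'a \<Rightarrow> bool) \<Rightarrow> 'a set \<Rightarrow> 'a set set \<Rightarrow> bool" where
  "path_partition E X P \<longleftrightarrow> \<Union>P = X \<and> (\<forall>W\<in>P. W \<noteq> {}) \<and>
     (\<forall>W1\<in>P. \<forall>W2\<in>P. W1 \<noteq> W2 \<longrightarrow> W1 \<inter> W2 = {}) \<and>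
     (\<forall>W\<in>P. induced_path E W \<and> card W \<ge> 2)"

lemma simple_graph_sym: "simple_graph V E \<Longrightarrow> E x y \<Longrightarrow> E y x"
  unfolding simple_graph_def by blast

lemma simple_graph_irrefl: "simple_graph V E \<Longrightarrow> \<not> E x x"
  unfolding simple_graph_def by blast

lemma is_cycle_edge_mod:
  assumes "is_cycle V E vs"
  shows "E (vs ! (j mod length vs)) (vs ! (Suc j mod length vs))"
proof -
  have "length vs > 0" using assms unfolding is_cycle_def by auto
  then have "j mod length vs < length vs" by simp
  then have "E (vs ! (j mod length vs)) (vs ! ((j mod length vs + 1) mod length vs))"
    using assms unfolding is_cycle_def by blast
  then show ?thesis by (simp add: mod_Suc_eq)
qed

lemma is_cycle_edge:
  "is_cycle V E vs \<Longrightarrow> Suc j < length vs \<Longrightarrow> E (vs ! j) (vs ! Suc j)"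
  using is_cycle_edge_mod[of V E vs j] by simp

lemma is_cycle_rotate:
  assumes cy: "is_cycle V E vs"
  shows "is_cycle V E (rotate r vs)"
  unfolding is_cycle_def
proof (intro conjI allI impI)
  show "length (rotate r vs) \<ge> 3" "distinct (rotate r vs)" "set (rotate r vs) \<subseteq> V"
    using cy unfolding is_cycle_def by auto
  fix i assume i: "i < length (rotate r vs)"
  let ?t = "length vs"
  have "0 < ?t" using i by auto
  have "rotate r vs ! ((i + 1) mod length (rotate r vs)) = vs ! ((r + (i + 1) mod ?t) mod ?t)"
    using \<open>0 < ?t\<close> by (subst nth_rotate) auto
  also have "(r + (i + 1) mod ?t) mod ?t = Suc (r + i) mod ?t"
    by (simp add: mod_add_right_eq)
  finally show "E (rotate r vs ! i) (rotate r vs ! ((i + 1) mod length (rotate r vs)))"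
    using i is_cycle_edge_mod[OF cy, of "r + i"] by (simp add: nth_rotate)
qed

lemma bipartite_cycle_edge_odd:
  assumes bp: "bipartite V E" and cy: "is_cycle V E vs"
    and "p < length vs" "q < length vs" and e: "E (vs ! p) (vs ! q)"
  shows "odd (p + q)"
proof -
  obtain A B where AB: "\<forall>x y. E x y \<longrightarrow> (x \<in> A \<and> y \<in> B) \<or> (x \<in> B \<and> y \<in> A)" "A \<inter> B = {}"
    using bp unfolding bipartite_def by blast
  have colour: "vs ! n \<in> A \<longleftrightarrow> (vs ! 0 \<in> A \<longleftrightarrow> even n)" if "n < length vs" for n
    using that
  proof (induction n)
    case (Suc n)
    have "E (vs ! n) (vs ! Suc n)" using is_cycle_edge[OF cy Suc.prems] .
    then have "vs ! Suc n \<in> A \<longleftrightarrow> vs ! n \<notin> A" using AB by blast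
    then show ?case using Suc by auto
  qed simp
  have "vs ! p \<in> A \<longleftrightarrow> vs ! q \<notin> A" using e AB by blast
  then show ?thesis using colour assms(3,4) by auto
qed

lemma is_cycle_arc_induced_path:
  assumes sg: "simple_graph V E" and cy: "is_cycle V E ws" and sk: "s + k \<le> length ws"
    and chordless: "\<And>i j. i + 2 \<le> j \<Longrightarrow> j < k \<Longrightarrow> \<not> E (ws ! (s + i)) (ws ! (s + j))"
  shows "induced_path E (set (take k (drop s ws)))"
proof -
  let ?ps = "take k (drop s ws)"
  have nth: "i < k \<Longrightarrow> ?ps ! i = ws ! (s + i)" for i using sk by simp
  have step: "E (ws ! (s + i)) (ws ! (s + Suc i))" if "Suc i < k" for i
    using is_cycle_edge[OF cy, of "s + i"] that sk by simp
  have "E (?ps ! i) (?ps ! j) \<longleftrightarrow> i = j + 1 \<or> j = i + 1" if "i < k" "j < k" for i j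
  proof
    assume e: "E (?ps ! i) (?ps ! j)"
    have "i \<noteq> j" using e simple_graph_irrefl[OF sg] by blast
    moreover have "\<not> i + 2 \<le> j" "\<not> j + 2 \<le> i"
      using e chordless[of i j] chordless[of j i] simple_graph_sym[OF sg] that nth by auto
    ultimately show "i = j + 1 \<or> j = i + 1" by linarith
  next
    assume "i = j + 1 \<or> j = i + 1"
    then show "E (?ps ! i) (?ps ! j)"
      using step[of i] step[of j] simple_graph_sym[OF sg] that nth by auto
  qed
  moreover have "distinct ?ps" using cy unfolding is_cycle_def by simp
  moreover have "length ?ps = k" using sk by simp
  ultimately show ?thesis unfolding induced_path_def by metis
qed

lemma bipartite_cycle_short_chord:
  assumes bp: "bipartite V E" and cy: "is_cycle V E ws"
    and "i + 2 \<le> j" "j \<le> i + 4" "j < length ws" and "E (ws ! i) (ws ! j)"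
  shows "j = i + 3"
proof -
  have "odd (i + j)" using bipartite_cycle_edge_odd[OF bp cy] assms(3-6) by simp
  with assms(3,4) show ?thesis by presburger
qed

lemma bipartite_cycle_arc_induced_path:
  assumes sg: "simple_graph V E" and bp: "bipartite V E" and cy: "is_cycle V E ws"
    and sk: "s + k \<le> length ws" and "k \<le> 5"
    and no_chord3: "\<And>a. a + 3 < k \<Longrightarrow> \<not> E (ws ! (s + a)) (ws ! (s + a + 3))"
  shows "induced_path E (set (take k (drop s ws)))"
proof (rule is_cycle_arc_induced_path[OF sg cy sk])
  fix i j assume ij: "i + 2 \<le> j" "j < k"
  show "\<not> E (ws ! (s + i)) (ws ! (s + j))"
  proof
    assume "E (ws ! (s + i)) (ws ! (s + j))"
    then have "s + j = s + i + 3"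
      using bipartite_cycle_short_chord[OF bp cy, of "s + i" "s + j"] ij sk \<open>k \<le> 5\<close> by simp
    then show False using no_chord3[of i] \<open>E (ws ! (s + i)) (ws ! (s + j))\<close> ij by (simp add: add.assoc)
  qed
qed

fun blocks :: "nat list \<Rightarrow> 'b list \<Rightarrow> 'b list list" where
  "blocks [] xs = []"
| "blocks (k # ks) xs = take k xs # blocks ks (drop k xs)"

lemma concat_blocks: "concat (blocks ls xs) = take (sum_list ls) xs"
  by (induction ls arbitrary: xs) (simp_all add: take_add)

lemma length_blocks: "length (blocks ls xs) = length ls"
  by (induction ls arbitrary: xs) simp_all

lemma blocks_append:
  "sum_list h \<le> length xs \<Longrightarrow> blocks (h @ r) xs = blocks h xs @ blocks r (drop (sum_list h) xs)"
  by (induction h arbitrary: xs) (auto simp: add.commute)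

lemma blocks_are_arcs:
  assumes "b \<in> set (blocks ls xs)" "sum_list ls \<le> length xs"
  shows "\<exists>s. b = take (length b) (drop s xs) \<and> s + length b \<le> length xs \<and> length b \<in> set ls"
  using assms
proof (induction ls arbitrary: xs)
  case (Cons k ks)
  show ?case
  proof (cases "b = take k xs")
    case True
    then show ?thesis using Cons.prems by (intro exI[of _ 0]) auto
  next
    case False
    then have "b \<in> set (blocks ks (drop k xs))" "sum_list ks \<le> length (drop k xs)"
      using Cons.prems by auto
    then obtain s where "b = take (length b) (drop s (drop k xs))"
        "s + length b \<le> length (drop k xs)" "length b \<in> set ks"
      using Cons.IH by blast
    then show ?thesis using Cons.prems(2) by (intro exI[of _ "k + s"]) (auto simp: add.commute)
  qed
qed simp

lemma path_partition_blocks: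
  assumes dist: "distinct xs" and sum: "sum_list ls = length xs" and ge2: "\<forall>k\<in>set ls. 2 \<le> k"
    and paths: "\<forall>b\<in>set (blocks ls xs). induced_path E (set b)"
  shows "path_partition E (set xs) (set (map set (blocks ls xs)))"
proof -
  have concat: "concat (blocks ls xs) = xs" using sum by (simp add: concat_blocks)
  have card: "card (set b) \<ge> 2" if "b \<in> set (blocks ls xs)" for b
  proof -
    have "distinct b" using dist concat that by (metis distinct_concat_iff)
    moreover have "length b \<in> set ls" using blocks_are_arcs[OF that] sum by auto
    ultimately show ?thesis using ge2 by (simp add: distinct_card)
  qed
  have "\<Union> (set (map set (blocks ls xs))) = set xs"
    using concat by (metis set_concat set_map)
  moreover have "set b1 \<inter> set b2 = {}"
    if "b1 \<in> set (blocks ls xs)" "b2 \<in> set (blocks ls xs)" "set b1 \<noteq> set b2" for b1 b2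
    using dist concat that by (metis distinct_concat_iff)
  ultimately show ?thesis
    unfolding path_partition_def using card paths by fastforce
qed

lemma bipartite_cycle_path_partition:
  assumes sg: "simple_graph V E" and bp: "bipartite V E" and cy: "is_cycle V E ws"
    and sum: "sum_list h + 3 * n = length ws" and ge3: "\<forall>k\<in>set h. 3 \<le> k"
    and paths: "\<forall>b\<in>set (blocks h ws). induced_path E (set b)"
  shows "\<exists>P. path_partition E (set ws) P \<and> 3 * card P \<le> length ws"
proof -
  let ?ls = "h @ replicate n 3" and ?rest = "drop (sum_list h) ws"
  have sum': "sum_list ?ls = length ws" using sum by (simp add: sum_list_replicate)
  have ge3': "\<forall>k\<in>set ?ls. 3 \<le> k" using ge3 by auto
  have "induced_path E (set b)" if b: "b \<in> set (blocks (replicate n 3) ?rest)" for b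
  proof -
    have "sum_list (replicate n 3) \<le> length ?rest" using sum by (simp add: sum_list_replicate)
    from blocks_are_arcs[OF b this] obtain s
      where s: "b = take (length b) (drop s ?rest)" "s + length b \<le> length ?rest" "length b = 3"
      by (metis in_set_replicate)
    then have "b = take 3 (drop (sum_list h + s) ws)" by (simp add: add.commute)
    then show ?thesis
      using bipartite_cycle_arc_induced_path[OF sg bp cy, of "sum_list h + s" 3] s(2,3) by simp
  qed
  then have "\<forall>b\<in>set (blocks ?ls ws). induced_path E (set b)"
    using paths blocks_append[of h ws] sum by auto
  moreover have "distinct ws" using cy unfolding is_cycle_def by simp
  moreover have "\<forall>k\<in>set ?ls. 2 \<le> k" using ge3' by (metis Suc_leD numeral_2_eq_2 numeral_3_eq_3)
  ultimately have "path_partition E (set ws) (set (map set (blocks ?ls ws)))"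
    using path_partition_blocks sum' by blast
  moreover have "3 * card (set (map set (blocks ?ls ws))) \<le> length ws"
  proof -
    have "3 * length ls \<le> sum_list ls" if "\<forall>k\<in>set ls. 3 \<le> k" for ls :: "nat list"
      using that by (induction ls) auto
    then have "3 * length ?ls \<le> length ws" using ge3' sum' by metis
    then show ?thesis using card_length[of "map set (blocks ?ls ws)"]
      by (simp add: length_blocks)
  qed
  ultimately show ?thesis by blast
qed

lemma cubic_no_four_neighbours:
  assumes sg: "simple_graph V E" and cu: "cubic V E"
    and "E v a" "E v b" "E v c" "E v d" and "distinct [a, b, c, d]"
  shows False
proof -
  have "v \<in> V" using sg \<open>E v a\<close> unfolding simple_graph_def by blast
  then have "card {u \<in> V. E v u} = 3" using cu unfolding cubic_def by blast
  moreover have "finite {u \<in> V. E v u}" using sg unfolding simple_graph_def by auto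
  moreover have "{a, b, c, d} \<subseteq> {u \<in> V. E v u}" using assms(3-6) sg unfolding simple_graph_def by blast
  ultimately have "card {a, b, c, d} \<le> 3" by (metis card_mono)
  then show False using \<open>distinct [a, b, c, d]\<close> by simp
qed

text \<open>Otherwise \<open>ws ! 3\<close> would have the four neighbours \<open>ws ! 0, ws ! 2, ws ! 4, ws ! 6\<close>.\<close>
lemma cubic_cycle_no_consecutive_chords:
  assumes sg: "simple_graph V E" and cu: "cubic V E" and cy: "is_cycle V E ws"
    and "7 \<le> length ws" and "E (ws ! 0) (ws ! 3)"
  shows "\<not> E (ws ! 3) (ws ! 6)"
proof
  assume "E (ws ! 3) (ws ! 6)"
  moreover have "E (ws ! 3) (ws ! 0)" using assms(5) simple_graph_sym[OF sg] by blast
  moreover have "E (ws ! 3) (ws ! 2)" "E (ws ! 3) (ws ! 4)"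
    using is_cycle_edge[OF cy, of 2] is_cycle_edge[OF cy, of 3] simple_graph_sym[OF sg] assms(4)
    by (simp_all add: numeral_eq_Suc)
  moreover have "distinct [ws ! 0, ws ! 2, ws ! 4, ws ! 6]"
  proof -
    have "distinct ws" using cy unfolding is_cycle_def by simp
    moreover have "0 < length ws" using assms(4) by auto
    ultimately show ?thesis using assms(4) by (simp add: nth_eq_iff_index_eq)
  qed
  ultimately show False using cubic_no_four_neighbours[OF sg cu] by blast
qed

definition chord3 :: "('a \<Rightarrow> 'a \<Rightarrow> bool) \<Rightarrow> 'a list \<Rightarrow> nat \<Rightarrow> bool" where
  "chord3 E vs i \<longleftrightarrow> E (vs ! (i mod length vs)) (vs ! ((i + 3) mod length vs))"

lemma chord3_rotate:
  assumes "a + 3 < length vs"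
  shows "chord3 E vs (r + a) \<longleftrightarrow> E (rotate r vs ! a) (rotate r vs ! (a + 3))"
  using assms by (simp add: chord3_def nth_rotate add.assoc)

lemma cubic_cycle_chord3_add3:
  assumes sg: "simple_graph V E" and cu: "cubic V E" and cy: "is_cycle V E vs"
    and "7 \<le> length vs" and "chord3 E vs i"
  shows "\<not> chord3 E vs (i + 3)"
  using cubic_cycle_no_consecutive_chords[OF sg cu is_cycle_rotate[OF cy, of i]] assms(4,5)
    chord3_rotate[of 0 vs E i] chord3_rotate[of 3 vs E i]
  by simp

lemma exists_free_positions:
  fixes P :: "nat \<Rightarrow> bool"
  assumes "\<And>i. P i \<Longrightarrow> \<not> P (i + 3)"
  shows "\<exists>r. \<not> P r \<and> (\<not> P (r + 1) \<or> \<not> P (r + 4))"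
proof (rule ccontr)
  assume none: "\<nexists>r. \<not> P r \<and> (\<not> P (r + 1) \<or> \<not> P (r + 4))"
  then obtain i where "P i" by blast
  then have "\<not> P (i + 3)" using assms by blast
  then have "P (i + 3 + 1)" "P (i + 3 + 4)" using none by blast+
  then show False using assms[of "i + 4"] by (simp add: add.assoc add.commute)
qed

lemma rotation_arc_induced_path:
  assumes sg: "simple_graph V E" and bp: "bipartite V E" and cy: "is_cycle V E vs"
    and "s + k \<le> length vs" "k \<le> 5"
    and no_chord3: "\<And>a. a + 3 < k \<Longrightarrow> \<not> chord3 E vs (r + s + a)"
  shows "induced_path E (set (take k (drop s (rotate r vs))))"
  using bipartite_cycle_arc_induced_path[OF sg bp is_cycle_rotate[OF cy]] assms(4,5)
    no_chord3 chord3_rotate[of "s + _" vs E r]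
  by (simp add: add.assoc)

lemma rotation_path_partition:
  assumes sg: "simple_graph V E" and bp: "bipartite V E" and cy: "is_cycle V E vs"
    and "sum_list h + 3 * n = length vs" and "\<forall>k\<in>set h. 3 \<le> k"
    and "\<forall>b\<in>set (blocks h (rotate r vs)). induced_path E (set b)"
  shows "\<exists>P. path_partition E (set vs) P \<and> 3 * card P \<le> length vs"
  using bipartite_cycle_path_partition[OF sg bp is_cycle_rotate[OF cy]] assms(4-6) by simp

lemma path_partition_one_long_arc:
  assumes sg: "simple_graph V E" and bp: "bipartite V E" and cy: "is_cycle V E vs"
    and t: "length vs = k + 3 * n" and "3 \<le> k" "k \<le> 5"
    and no_chord3: "\<And>a. a + 3 < k \<Longrightarrow> \<not> chord3 E vs (r + a)"
  shows "\<exists>P. path_partition E (set vs) P \<and> 3 * card P \<le> length vs"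
proof -
  have "induced_path E (set (take k (drop 0 (rotate r vs))))"
    using rotation_arc_induced_path[OF sg bp cy, of 0 k r] t \<open>k \<le> 5\<close> no_chord3 by simp
  then show ?thesis using rotation_path_partition[OF sg bp cy, of "[k]" n r] t \<open>3 \<le> k\<close> by simp
qed

lemma path_partition_two_long_arcs:
  assumes sg: "simple_graph V E" and bp: "bipartite V E" and cy: "is_cycle V E vs"
    and t: "length vs = 8 + 3 * n" and "\<not> chord3 E vs r" "\<not> chord3 E vs (r + 4)"
  shows "\<exists>P. path_partition E (set vs) P \<and> 3 * card P \<le> length vs"
proof -
  have "induced_path E (set (take 4 (drop s (rotate r vs))))" if "s = 0 \<or> s = 4" for s
    using rotation_arc_induced_path[OF sg bp cy, of s 4 r] that t assms(5,6)
    by (auto simp: less_Suc_eq)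
  from this[of 0] this[of 4] show ?thesis
    using rotation_path_partition[OF sg bp cy, of "[4, 4]" n r] t by simp
qed

lemma path_partition_chord3_free:
  assumes sg: "simple_graph V E" and bp: "bipartite V E" and cy: "is_cycle V E vs"
    and t: "\<not> 3 dvd length vs" "7 \<le> length vs"
    and r: "\<not> chord3 E vs r" "\<not> chord3 E vs (r + 1) \<or> \<not> chord3 E vs (r + 4)"
  shows "\<exists>P. path_partition E (set vs) P \<and> 3 * card P \<le> length vs"
proof (cases "length vs mod 3 = 1")
  case True
  then have "\<exists>n. length vs = 4 + 3 * n" using t by presburger
  then show ?thesis using path_partition_one_long_arc[OF sg bp cy, of 4 _ r] r(1) by auto
next
  case False
  then have "\<exists>n. length vs = 5 + 3 * Suc n \<and> length vs = 8 + 3 * n" using t by presburger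
  then obtain n where n: "length vs = 5 + 3 * Suc n" "length vs = 8 + 3 * n" by blast
  from r(2) show ?thesis
  proof
    assume "\<not> chord3 E vs (r + 1)"
    then have "\<not> chord3 E vs (r + a)" if "a + 3 < 5" for a
      using r(1) that by (cases a) (auto simp: less_Suc_eq)
    then show ?thesis using path_partition_one_long_arc[OF sg bp cy, of 5 "Suc n" r] n(1) by simp
  next
    assume "\<not> chord3 E vs (r + 4)"
    then show ?thesis using path_partition_two_long_arcs[OF sg bp cy, of n r] r(1) n(2) by simp
  qed
qed

theorem mainTheorem6:
  fixes V :: "'a set" and E :: "'a \<Rightarrow> 'a \<Rightarrow> bool" and vs :: "'a list"
  assumes "simple_graph V E" and "cubic V E" and "bipartite V E"
    and "is_cycle V E vs" and "length vs \<ge> 6"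
  shows "\<exists>P :: 'a set set. \<Union>P = set vs \<and> (\<forall>W\<in>P. W \<noteq> {}) \<and>
           (\<forall>W1\<in>P. \<forall>W2\<in>P. W1 \<noteq> W2 \<longrightarrow> W1 \<inter> W2 = {}) \<and>
           3 * card P \<le> length vs \<and>
           (\<forall>W\<in>P. induced_path E W \<and> card W \<ge> 2)"
proof -
  note sg = assms(1) and cu = assms(2) and bp = assms(3) and cy = assms(4)
  have "\<exists>P. path_partition E (set vs) P \<and> 3 * card P \<le> length vs"
  proof (cases "3 dvd length vs")
    case True
    then obtain n where "length vs = 3 * n" by blast
    then show ?thesis using bipartite_cycle_path_partition[OF sg bp cy, of "[]" n] by simp
  next
    case False
    then have "7 \<le> length vs" using assms(5) by presburger
    then obtain r where "\<not> chord3 E vs r" "\<not> chord3 E vs (r + 1) \<or> \<not> chord3 E vs (r + 4)"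
      using exists_free_positions cubic_cycle_chord3_add3[OF sg cu cy] by blast
    then show ?thesis using path_partition_chord3_free[OF sg bp cy False \<open>7 \<le> length vs\<close>] by blast
  qed
  then obtain P where "path_partition E (set vs) P" "3 * card P \<le> length vs" by blast
  then show ?thesis unfolding path_partition_def by (intro exI[of _ P]) simp
qed

end
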